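(* Let $d\ge 2$ and let $(c_\lambda)_{\lambda\vdash 2d}$ be real numbers; write $f^{(n)}=\sum_{\lambda\vdash 2d}c_\lambda p^{(n)}_\lambda$. Then $f^{(n)}$ is nonnegative on $\mathbb{R}^n$ for every $n\ge 2d$ if and only if the $2d$-variate polynomial $\Phi_f(s,t)=\sum_{\lambda\vdash 2d}c_\lambda\Phi_\lambda(s,t)$ is nonnegative on $\Delta\times\mathbb{R}^d$.
   Context: $p_i^{(n)}=\frac1n(x_1^i+\dots+x_n^i)$ and $p^{(n)}_\lambda=\prod_{i=1}^l p^{(n)}_{\lambda_i}$ for a partition $\lambda=(\lambda_1,\dots,\lambda_l)$ of $2d$. For such $\lambda$, $\Phi_\lambda(s_1,\dots,s_d,t_1,\dots,t_d)=\prod_{i=1}^l\left(s_1t_1^{\lambda_i}+\dots+s_dt_d^{\lambda_i}\right)$. $\Delta=\{\alpha\in[0,1]^d:\alpha_1+\dots+\alpha_d=1\}$ is the standard simplex. *)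

theory Defs
  imports Complex_Main
begin

definition partitions :: "nat \<Rightarrow> nat list set" where
  "partitions m = {lam. sorted_wrt (\<ge>) lam \<and> (\<forall>k\<in>set lam. 0 < k) \<and> sum_list lam = m}"

definition psum :: "nat \<Rightarrow> nat \<Rightarrow> (nat \<Rightarrow> real) \<Rightarrow> real" where
  "psum n i x = (1 / real n) * (\<Sum>j<n. x j ^ i)"

definition psum_part :: "nat \<Rightarrow> nat list \<Rightarrow> (nat \<Rightarrow> real) \<Rightarrow> real" where
  "psum_part n lam x = prod_list (map (\<lambda>i. psum n i x) lam)"

definition Phi :: "nat \<Rightarrow> nat list \<Rightarrow> (nat \<Rightarrow> real) \<Rightarrow> (nat \<Rightarrow> real) \<Rightarrow> real" where
  "Phi d lam s t = prod_list (map (\<lambda>k. \<Sum>j<d. s j * t j ^ k) lam)"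

definition simplex :: "nat \<Rightarrow> (nat \<Rightarrow> real) \<Rightarrow> bool" where
  "simplex d s \<longleftrightarrow> (\<forall>j<d. 0 \<le> s j \<and> s j \<le> 1) \<and> (\<Sum>j<d. s j) = 1"

end

theory Submission
  imports Defs "HOL-Computational_Algebra.Polynomial"
begin

text \<open>
  (\<open>\<Leftarrow>\<close>) Fix \<open>x \<in> \<real>\<^sup>n\<close>. Gauss quadrature for the empirical measure of \<open>x\<^sub>1, \<dots>, x\<^sub>n\<close>,
  with the \<open>d\<close> roots of its \<open>d\<close>-th orthogonal polynomial as nodes \<open>t\<close> and nonnegative weights
  \<open>s \<in> \<Delta>\<close>, reproduces \<open>p\<^sub>k(x)\<close> for all \<open>k < 2d\<close> and underestimates \<open>p\<^sub>2\<^sub>d(x)\<close> (if \<open>x\<close> takes at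
  most \<open>d\<close> values, use these values with their frequencies instead). Only \<open>\<lambda> = (2d)\<close> involves
  \<open>p\<^sub>2\<^sub>d\<close>, and \<open>c\<^sub>(\<^sub>2\<^sub>d\<^sub>) \<ge> 0\<close> because \<open>\<Phi>\<^sub>f \<ge> 0\<close> near a vertex of \<open>\<Delta>\<close>; hence
  \<open>f(x) \<ge> \<Phi>\<^sub>f(s, t) \<ge> 0\<close>.

  (\<open>\<Rightarrow>\<close>) If \<open>s \<in> \<Delta>\<close> has coordinates in \<open>\<nat>/N\<close> with \<open>N \<ge> 2d\<close>, repeating each \<open>t\<^sub>j\<close> exactly
  \<open>N s\<^sub>j\<close> times gives \<open>x \<in> \<real>\<^sup>N\<close> with \<open>f(x) = \<Phi>\<^sub>f(s, t)\<close>; such \<open>s\<close> are dense in \<open>\<Delta>\<close>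
  and \<open>\<Phi>\<^sub>f\<close> is continuous.
\<close>

definition moment_fun :: "nat \<Rightarrow> (nat \<Rightarrow> real) \<Rightarrow> real poly \<Rightarrow> real" where
  "moment_fun n x p = (\<Sum>i<n. poly p (x i))"

lemma moment_fun_0 [simp]: "moment_fun n x 0 = 0"
  by (simp add: moment_fun_def)

lemma moment_fun_monom: "moment_fun n x (monom 1 k) = (\<Sum>i<n. x i ^ k)"
  by (simp add: moment_fun_def poly_monom)

lemma moment_fun_add: "moment_fun n x (p + q) = moment_fun n x p + moment_fun n x q"
  by (simp add: moment_fun_def sum.distrib)

lemma moment_fun_diff: "moment_fun n x (p - q) = moment_fun n x p - moment_fun n x q"
  by (simp add: moment_fun_def sum_subtractf)

lemma moment_fun_smult: "moment_fun n x (smult c p) = c * moment_fun n x p"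
  by (simp add: moment_fun_def sum_distrib_left)

lemma moment_fun_const_mult: "moment_fun n x ([:c:] * p) = c * moment_fun n x p"
  by (simp add: moment_fun_smult)

lemma moment_fun_sum: "moment_fun n x (\<Sum>j\<in>A. f j) = (\<Sum>j\<in>A. moment_fun n x (f j))"
  unfolding moment_fun_def poly_sum by (rule sum.swap)

lemmas moment_fun_linear =
  moment_fun_add moment_fun_diff moment_fun_smult moment_fun_const_mult

lemma moment_fun_square_nonneg: "0 \<le> moment_fun n x (p * p)"
  unfolding moment_fun_def by (rule sum_nonneg) simp

lemma moment_fun_minus: "moment_fun n x (- p) = - moment_fun n x p"
  by (simp add: moment_fun_def sum_negf)

lemma moment_fun_nonneg_eq_0_imp_roots:
  assumes "\<forall>y. 0 \<le> poly p y" "moment_fun n x p = 0"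
  shows "x ` {..<n} \<subseteq> {y. poly p y = 0}"
  using assms sum_nonneg_eq_0_iff[of "{..<n}" "\<lambda>i. poly p (x i)"]
  by (auto simp: moment_fun_def)

lemma moment_fun_square_pos:
  assumes "p \<noteq> 0" "degree p < card (x ` {..<n})"
  shows "0 < moment_fun n x (p * p)"
proof -
  have "moment_fun n x (p * p) \<noteq> 0"
  proof
    assume "moment_fun n x (p * p) = 0"
    then have "x ` {..<n} \<subseteq> {y. poly p y = 0}"
      using moment_fun_nonneg_eq_0_imp_roots[of "p * p"] by auto
    then have "card (x ` {..<n}) \<le> card {y. poly p y = 0}"
      by (rule card_mono[OF poly_roots_finite[OF assms(1)]])
    also have "\<dots> \<le> degree p" using card_poly_roots_bound[OF assms(1)] .
    finally show False using assms(2) by simp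
  qed
  then show ?thesis using moment_fun_square_nonneg[of n x p] by simp
qed

definition orthogonal_below :: "nat \<Rightarrow> (nat \<Rightarrow> real) \<Rightarrow> real poly \<Rightarrow> nat \<Rightarrow> bool" where
  "orthogonal_below n x P m \<longleftrightarrow> (\<forall>q. degree q < m \<longrightarrow> moment_fun n x (P * q) = 0)"

definition three_term :: "nat \<Rightarrow> (nat \<Rightarrow> real) \<Rightarrow> real poly \<Rightarrow> real poly \<Rightarrow> real poly" where
  "three_term n x P Q =
     [:- (moment_fun n x ([:0,1:] * P * P) / moment_fun n x (P * P)), 1:] * P
     - smult (moment_fun n x (P * P) / moment_fun n x (Q * Q)) Q"

text \<open>Past degree
  \<open>card (x ` {..<n})\<close> some norm \<open>moment_fun n x (P * P)\<close> vanishes and the divisions return junk.\<close>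
fun orth_poly :: "nat \<Rightarrow> (nat \<Rightarrow> real) \<Rightarrow> nat \<Rightarrow> real poly" where
  "orth_poly n x 0 = 1"
| "orth_poly n x (Suc 0) = [:- (moment_fun n x [:0,1:] / moment_fun n x 1), 1:]"
| "orth_poly n x (Suc (Suc k)) = three_term n x (orth_poly n x (Suc k)) (orth_poly n x k)"

lemma monic_linear_step:
  fixes P Q :: "'a::idom poly"
  assumes "lead_coeff P = 1" "degree Q < degree P"
  shows "degree ([:-a, 1:] * P - smult b Q) = Suc (degree P)"
    and "lead_coeff ([:-a, 1:] * P - smult b Q) = 1"
proof -
  have P0: "P \<noteq> 0" using assms(1) by auto
  have deg: "degree ([:-a, 1:] * P) = Suc (degree P)"
    using P0 by (subst degree_mult_eq) auto
  have "degree (smult b Q) < degree ([:-a, 1:] * P)"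
    using deg assms(2) degree_smult_le[of b Q] by linarith
  then show "degree ([:-a, 1:] * P - smult b Q) = Suc (degree P)"
    using deg by (metis degree_add_eq_left degree_minus diff_conv_add_uminus)
  then show "lead_coeff ([:-a, 1:] * P - smult b Q) = 1"
    using assms by (simp add: coeff_eq_0 lead_coeff_mult)
qed

lemma orth_poly_monic:
  "degree (orth_poly n x k) = k \<and> lead_coeff (orth_poly n x k) = 1"
proof (induction n x k rule: orth_poly.induct)
  case (3 n x k)
  then have "lead_coeff (orth_poly n x (Suc k)) = 1"
    and "degree (orth_poly n x k) < degree (orth_poly n x (Suc k))" by auto
  from monic_linear_step[OF this] show ?case
    unfolding orth_poly.simps three_term_def using 3 by (simp only:)
qed simp_all

lemma monic_reduce_degree:
  fixes P q :: "'a::comm_ring_1 poly"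
  assumes "degree P = m" "lead_coeff P = 1" "degree q \<le> m"
  shows "degree (q - [:coeff q m:] * P) < m \<or> q - [:coeff q m:] * P = 0"
proof -
  define r where "r = q - [:coeff q m:] * P"
  have "coeff r m = 0" using assms by (simp add: r_def)
  moreover have "degree r \<le> m" unfolding r_def using assms
    by (intro degree_diff_le) (auto intro: degree_smult_le)
  ultimately show ?thesis unfolding r_def[symmetric]
    by (metis le_neq_implies_less leading_coeff_0_iff)
qed

lemma orthogonal_below_top:
  assumes "orthogonal_below n x P m" "degree P = m" "lead_coeff P = 1" "degree q \<le> m"
  shows "moment_fun n x (P * q) = coeff q m * moment_fun n x (P * P)"
proof -
  define r where "r = q - [:coeff q m:] * P"
  have "moment_fun n x (P * r) = 0"
    using monic_reduce_degree[OF assms(2-4)] assms(1) by (auto simp: r_def orthogonal_below_def)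
  moreover have "P * q = [:coeff q m:] * (P * P) + P * r" by (simp add: r_def algebra_simps)
  ultimately show ?thesis by (simp add: moment_fun_linear)
qed

lemma three_term_orthogonal:
  assumes P: "degree P = Suc k" "lead_coeff P = 1" "orthogonal_below n x P (Suc k)"
    "moment_fun n x (P * P) \<noteq> 0"
  assumes Q: "degree Q = k" "lead_coeff Q = 1" "orthogonal_below n x Q k"
    "moment_fun n x (Q * Q) \<noteq> 0"
  shows "orthogonal_below n x (three_term n x P Q) (Suc (Suc k))"
  unfolding orthogonal_below_def
proof (intro allI impI)
  fix q :: "real poly"
  assume "degree q < Suc (Suc k)"
  define X where "X = [:0, 1::real:]"
  define a where "a = moment_fun n x (X * P * P) / moment_fun n x (P * P)"
  define b where "b = moment_fun n x (P * P) / moment_fun n x (Q * Q)"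
  define N where "N = X * P - [:a:] * P - [:b:] * Q"
  define c where "c = coeff q (Suc k)"
  define r where "r = q - [:c:] * P"
  have N: "three_term n x P Q = N"
    by (simp add: three_term_def N_def a_def b_def X_def algebra_simps)
  have dr: "degree r \<le> k"
    using monic_reduce_degree[OF P(1,2), of q] \<open>degree q < Suc (Suc k)\<close> by (auto simp: r_def c_def)
  have "moment_fun n x (P * Q) = 0" using P(3) Q(1) by (simp add: orthogonal_below_def)
  then have NP: "moment_fun n x (N * P) = 0"
    using P(4) by (simp add: N_def a_def algebra_simps moment_fun_linear)
  have "moment_fun n x (P * (X * r)) = coeff r k * moment_fun n x (P * P)"
    using orthogonal_below_top[OF P(3,1,2), of "X * r"] dr
    by (simp add: X_def degree_pCons_eq_if coeff_pCons split: nat.split)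
  moreover have "moment_fun n x (P * r) = 0" using P(3) dr by (simp add: orthogonal_below_def)
  moreover have "moment_fun n x (Q * r) = coeff r k * moment_fun n x (Q * Q)"
    by (rule orthogonal_below_top[OF Q(3,1,2) dr])
  ultimately have Nr: "moment_fun n x (N * r) = 0"
    using Q(4) by (simp add: N_def b_def algebra_simps moment_fun_linear)
  have "N * q = [:c:] * (N * P) + N * r" by (simp add: r_def algebra_simps)
  then show "moment_fun n x (three_term n x P Q * q) = 0"
    using NP Nr by (simp add: N moment_fun_linear)
qed

lemma orth_poly_orthogonal:
  assumes "\<And>j. j < k \<Longrightarrow> moment_fun n x (orth_poly n x j * orth_poly n x j) \<noteq> 0"
  shows "orthogonal_below n x (orth_poly n x k) k"
  using assms
proof (induction n x k rule: orth_poly.induct)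
  case (1 n x)
  then show ?case by (simp add: orthogonal_below_def)
next
  case (2 n x)
  have L1: "moment_fun n x 1 \<noteq> 0" using 2[of 0] by simp
  show ?case unfolding orthogonal_below_def
  proof (intro allI impI)
    fix q :: "real poly"
    assume "degree q < Suc 0"
    then obtain c where "q = [:c:]" by (metis degree_eq_zeroE less_Suc0)
    then have "orth_poly n x (Suc 0) * q
        = [:c:] * [:0, 1:] - smult (c * moment_fun n x [:0, 1:] / moment_fun n x 1) 1"
      by simp
    then show "moment_fun n x (orth_poly n x (Suc 0) * q) = 0"
      using L1 by (simp only: moment_fun_linear) simp
  qed
next
  case (3 n x k)
  show ?case
    unfolding orth_poly.simps(3)
    by (rule three_term_orthogonal)
      (use 3 orth_poly_monic[of n x k] orth_poly_monic[of n x "Suc k"] in auto)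
qed

lemma orth_poly_orthogonal_support:
  assumes "d \<le> card (x ` {..<n})"
  shows "orthogonal_below n x (orth_poly n x d) d"
proof (rule orth_poly_orthogonal)
  fix j assume "j < d"
  have "orth_poly n x j \<noteq> 0" "degree (orth_poly n x j) = j"
    using orth_poly_monic[of n x j] by auto
  then show "moment_fun n x (orth_poly n x j * orth_poly n x j) \<noteq> 0"
    using moment_fun_square_pos[of "orth_poly n x j" x n] \<open>j < d\<close> assms by simp
qed

definition sign_definite :: "real poly \<Rightarrow> bool" where
  "sign_definite p \<longleftrightarrow> (\<forall>y. 0 \<le> poly p y) \<or> (\<forall>y. poly p y \<le> 0)"

lemma sign_definite_if_no_roots:
  assumes "\<And>y. poly p y \<noteq> 0"
  shows "sign_definite p"
proof (rule ccontr)
  assume "\<not> sign_definite p"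
  then obtain y1 y2 where y1: "poly p y1 < 0" and y2: "0 < poly p y2"
    by (auto simp: sign_definite_def not_le)
  then consider "y1 < y2" | "y2 < y1" by (cases y1 y2 rule: linorder_cases) auto
  then show False
    using poly_IVT_pos[OF _ y1 y2] poly_IVT_neg[OF _ y2 y1] assms by cases blast+
qed

text \<open>The roots in \<open>A\<close> are those of odd multiplicity: multiplying by \<open>X - a\<close> for each of
  them leaves only roots of even multiplicity, at which no sign change happens.\<close>
lemma exists_roots_product_sign_definite:
  assumes "p \<noteq> 0"
  shows "\<exists>A. finite A \<and> A \<subseteq> {y. poly p y = 0} \<and> sign_definite (p * (\<Prod>a\<in>A. [:-a, 1:]))"
  using assms
proof (induction "degree p" arbitrary: p rule: less_induct)
  case (less p)
  show ?case
  proof (cases "\<exists>a. poly p a = 0")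
    case False
    then show ?thesis using sign_definite_if_no_roots[of p] by (intro exI[of _ "{}"]) auto
  next
    case True
    then obtain a p1 where p1: "p = [:-a, 1:] * p1"
      by (metis dvdE poly_eq_0_iff_dvd)
    with \<open>p \<noteq> 0\<close> have "p1 \<noteq> 0" by auto
    then have "degree p = Suc (degree p1)" unfolding p1 by (subst degree_mult_eq) auto
    then obtain A1 where A1: "finite A1" "A1 \<subseteq> {y. poly p1 y = 0}"
      and sd: "sign_definite (p1 * (\<Prod>b\<in>A1. [:-b, 1:]))"
      using less.hyps \<open>p1 \<noteq> 0\<close> by (metis lessI)
    have roots: "{y. poly p1 y = 0} \<subseteq> {y. poly p y = 0}" by (auto simp: p1)
    show ?thesis
    proof (cases "a \<in> A1")
      case True
      have "p * (\<Prod>b\<in>A1 - {a}. [:-b, 1:]) = p1 * (\<Prod>b\<in>A1. [:-b, 1:])"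
        by (simp only: p1 prod.remove[OF A1(1) True] mult_ac)
      then show ?thesis using A1 roots sd by (intro exI[of _ "A1 - {a}"]) auto
    next
      case False
      have "poly (p * (\<Prod>b\<in>insert a A1. [:-b, 1:])) y
          = (y - a)\<^sup>2 * poly (p1 * (\<Prod>b\<in>A1. [:-b, 1:])) y" for y
        unfolding p1 poly_mult poly_prod prod.insert[OF A1(1) False]
        by (simp add: power2_eq_square)
      then have "sign_definite (p * (\<Prod>b\<in>insert a A1. [:-b, 1:]))"
        using sd unfolding sign_definite_def
        by (metis mult_nonneg_nonneg mult_nonneg_nonpos zero_le_power2)
      then show ?thesis using A1 roots p1 by (intro exI[of _ "insert a A1"]) auto
    qed
  qed
qed

lemma moment_fun_sign_definite_eq_0:
  assumes "sign_definite p" "moment_fun n x p = 0"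
  shows "x ` {..<n} \<subseteq> {y. poly p y = 0}"
proof (cases "\<forall>y. 0 \<le> poly p y")
  case True
  then show ?thesis using moment_fun_nonneg_eq_0_imp_roots assms(2) by blast
next
  case False
  then have "\<forall>y. 0 \<le> poly (- p) y" using assms(1) unfolding sign_definite_def by auto
  then show ?thesis
    using moment_fun_nonneg_eq_0_imp_roots[of "- p"] assms(2) by (simp add: moment_fun_minus)
qed

text \<open>If \<open>P\<close> had fewer than \<open>d\<close> real roots, multiplying it by the product over its roots of
  odd multiplicity would give a sign-definite polynomial of zero moment, which must vanish on
  all the (at least \<open>d\<close>) points.\<close>
lemma orthogonal_card_roots:
  assumes "orthogonal_below n x P d" "degree P = d" "lead_coeff P = 1"
    and "d \<le> card (x ` {..<n})"
  shows "card {y. poly P y = 0} = d"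
proof -
  have P0: "P \<noteq> 0" using assms(3) by auto
  define Z where "Z = {y. poly P y = 0}"
  have fZ: "finite Z" using poly_roots_finite[OF P0] by (simp add: Z_def)
  have "card Z \<le> d" using card_poly_roots_bound[OF P0] assms(2) by (simp add: Z_def)
  moreover have "\<not> card Z < d"
  proof
    assume lt: "card Z < d"
    obtain A where A: "finite A" "A \<subseteq> Z" and sd: "sign_definite (P * (\<Prod>a\<in>A. [:-a, 1:]))"
      using exists_roots_product_sign_definite[OF P0] unfolding Z_def by blast
    define Q where "Q = (\<Prod>a\<in>A. [:-a, 1:])"
    have "degree Q \<le> card A"
      using degree_prod_sum_le[OF A(1), of "\<lambda>a. [:-a, 1:]"] by (simp add: Q_def)
    also have "\<dots> \<le> card Z" by (rule card_mono[OF fZ A(2)])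
    finally have "moment_fun n x (P * Q) = 0"
      using assms(1) lt by (simp add: orthogonal_below_def)
    then have "x ` {..<n} \<subseteq> {y. poly (P * Q) y = 0}"
      using moment_fun_sign_definite_eq_0 sd unfolding Q_def by blast
    also have "\<dots> \<subseteq> Z" using A by (auto simp: Q_def Z_def poly_prod prod_zero_iff)
    finally have "card (x ` {..<n}) \<le> card Z" by (rule card_mono[OF fZ])
    then show False using lt assms(4) by simp
  qed
  ultimately show ?thesis by (simp add: Z_def)
qed

definition lagrange_basis :: "(nat \<Rightarrow> 'a::field) \<Rightarrow> nat \<Rightarrow> nat \<Rightarrow> 'a poly" where
  "lagrange_basis t d j =
     smult (1 / (\<Prod>i\<in>{..<d} - {j}. t j - t i)) (\<Prod>i\<in>{..<d} - {j}. [:- t i, 1:])"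

lemma poly_lagrange_basis:
  assumes "inj_on t {..<d}" "j < d" "m < d"
  shows "poly (lagrange_basis t d j) (t m) = (if m = j then 1 else 0)"
proof (cases "m = j")
  case True
  have "(\<Prod>i\<in>{..<d} - {j}. t j - t i) \<noteq> 0"
    using assms by (auto simp: prod_zero_iff inj_on_def)
  then show ?thesis using True by (simp add: lagrange_basis_def poly_prod)
next
  case False
  have "(\<Prod>i\<in>{..<d} - {j}. poly [:- t i, 1:] (t m)) = 0"
    using assms False by (intro prod_zero) auto
  then show ?thesis using False by (simp add: lagrange_basis_def poly_prod)
qed

lemma degree_lagrange_basis:
  assumes "j < d"
  shows "degree (lagrange_basis t d j) < d"
proof -
  have "degree (lagrange_basis t d j) \<le> degree (\<Prod>i\<in>{..<d} - {j}. [:- t i, 1:])"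
    by (simp add: lagrange_basis_def)
  also have "\<dots> \<le> card ({..<d} - {j})"
    using degree_prod_sum_le[of "{..<d} - {j}" "\<lambda>i. [:- t i, 1:]"] by simp
  finally show ?thesis using assms by simp
qed

lemma lagrange_interpolation:
  assumes "inj_on t {..<d}" "degree r < d"
  shows "r = (\<Sum>j<d. smult (poly r (t j)) (lagrange_basis t d j))"
proof (rule poly_eqI_degree[of "t ` {..<d}"])
  have card: "card (t ` {..<d}) = d" using card_image[OF assms(1)] by simp
  show "poly r y = poly (\<Sum>j<d. smult (poly r (t j)) (lagrange_basis t d j)) y"
    if "y \<in> t ` {..<d}" for y
  proof -
    obtain m where m: "m < d" "y = t m" using \<open>y \<in> t ` {..<d}\<close> by auto
    have "poly (\<Sum>j<d. smult (poly r (t j)) (lagrange_basis t d j)) y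
        = (\<Sum>j<d. if j = m then poly r (t j) else 0)"
      unfolding poly_sum using m assms(1) by (intro sum.cong) (auto simp: poly_lagrange_basis)
    then show ?thesis using m by simp
  qed
  show "degree r < card (t ` {..<d})" using card assms(2) by simp
  have "degree (\<Sum>j<d. smult (poly r (t j)) (lagrange_basis t d j)) \<le> d - 1"
    by (rule degree_sum_le)
      (auto intro: order.trans[OF degree_smult_le] dest: degree_lagrange_basis[of _ d t])
  then show "degree (\<Sum>j<d. smult (poly r (t j)) (lagrange_basis t d j)) < card (t ` {..<d})"
    using card assms(2) by linarith
qed

text \<open>Gauss quadrature: orthogonality kills the quotient of \<open>p\<close> by \<open>P\<close>, and the remainder is
  recovered from its values at the roots of \<open>P\<close>, where it agrees with \<open>p\<close>.\<close>
lemma gauss_quadrature_exact: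
  assumes "orthogonal_below n x P d" "degree P = d"
    and "inj_on t {..<d}" "\<forall>j<d. poly P (t j) = 0" "degree p < 2 * d"
  shows "moment_fun n x p = (\<Sum>j<d. moment_fun n x (lagrange_basis t d j) * poly p (t j))"
proof -
  have "0 < d" using assms(5) by simp
  then have P0: "P \<noteq> 0" using assms(2) by auto
  define q where "q = p div P"
  define r where "r = p mod P"
  have p: "p = q * P + r" by (simp add: q_def r_def)
  have dr: "degree r < d"
    using degree_mod_less[OF P0, of p] \<open>0 < d\<close> assms(2) by (auto simp: r_def)
  have "degree q < d"
  proof (cases "q = 0")
    case False
    have "degree q + d = degree (p - r)"
      using False P0 assms(2) by (simp add: p degree_mult_eq)
    also have "\<dots> < 2 * d" using degree_diff_le_max[of p r] assms(5) dr by simp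
    finally show ?thesis by simp
  qed (simp add: \<open>0 < d\<close>)
  then have "moment_fun n x (P * q) = 0" using assms(1) by (simp add: orthogonal_below_def)
  then have "moment_fun n x p = moment_fun n x r" by (simp add: p moment_fun_add mult.commute)
  also have "\<dots> = moment_fun n x (\<Sum>j<d. smult (poly r (t j)) (lagrange_basis t d j))"
    using lagrange_interpolation[OF assms(3) dr] by simp
  also have "\<dots> = (\<Sum>j<d. moment_fun n x (lagrange_basis t d j) * poly r (t j))"
    by (simp add: moment_fun_sum moment_fun_smult mult.commute)
  also have "\<dots> = (\<Sum>j<d. moment_fun n x (lagrange_basis t d j) * poly p (t j))"
    using assms(4) by (intro sum.cong) (auto simp: p)
  finally show ?thesis .
qed

lemma quadrature_weight_nonneg:
  assumes exact: "\<And>p. degree p < 2 * d \<Longrightarrow> moment_fun n x p = (\<Sum>j<d. w j * poly p (t j))"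
    and "inj_on t {..<d}" "j < d"
  shows "0 \<le> w j"
proof -
  define L where "L = lagrange_basis t d j"
  have "degree (L * L) < 2 * d"
    using degree_mult_le[of L L] degree_lagrange_basis[OF assms(3), of t]
    unfolding L_def by linarith
  then have "moment_fun n x (L * L) = (\<Sum>m<d. w m * poly (L * L) (t m))" by (rule exact)
  also have "\<dots> = (\<Sum>m<d. if m = j then w m else 0)"
    using assms(2,3) by (intro sum.cong) (auto simp: L_def poly_lagrange_basis)
  also have "\<dots> = w j" using assms(3) by simp
  finally show ?thesis using moment_fun_square_nonneg[of n x L] by simp
qed

text \<open>\<open>X^(2d) - P^2\<close> has degree below \<open>2d\<close> and the same values as \<open>X^(2d)\<close> at the nodes.\<close>
lemma quadrature_top_moment_le:
  assumes exact: "\<And>p. degree p < 2 * d \<Longrightarrow> moment_fun n x p = (\<Sum>j<d. w j * poly p (t j))"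
    and "0 < d" "degree P = d" "lead_coeff P = 1" "\<forall>j<d. poly P (t j) = 0"
  shows "(\<Sum>j<d. w j * t j ^ (2 * d)) \<le> (\<Sum>i<n. x i ^ (2 * d))"
proof -
  define p where "p = monom 1 (2 * d) - P * P"
  have P0: "P \<noteq> 0" using assms(4) by auto
  have PP: "degree (P * P) = 2 * d" "lead_coeff (P * P) = 1"
    using assms(3,4) P0 by (simp add: degree_mult_eq mult_2, simp add: lead_coeff_mult)
  have "degree p < 2 * d"
  proof (cases "p = 0")
    case False
    have "degree p \<le> 2 * d" unfolding p_def
      using PP by (intro degree_diff_le) (auto intro: order.trans[OF degree_monom_le])
    moreover have "coeff p (2 * d) = 0" using PP by (simp add: p_def)
    ultimately show ?thesis using False by (metis le_neq_implies_less leading_coeff_0_iff)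
  qed (simp add: assms(2))
  then have "moment_fun n x p = (\<Sum>j<d. w j * t j ^ (2 * d))"
    using assms(5) by (simp add: exact p_def poly_monom)
  moreover have "moment_fun n x p = (\<Sum>i<n. x i ^ (2 * d)) - moment_fun n x (P * P)"
    by (simp add: p_def moment_fun_diff moment_fun_monom)
  ultimately show ?thesis using moment_fun_square_nonneg[of n x P] by simp
qed

lemma gauss_quadrature:
  fixes x :: "nat \<Rightarrow> real"
  assumes "0 < d" "d \<le> card (x ` {..<n})"
  obtains w t where "\<forall>j<d. 0 \<le> w j"
    and "\<forall>k<2 * d. (\<Sum>j<d. w j * t j ^ k) = (\<Sum>i<n. x i ^ k)"
    and "(\<Sum>j<d. w j * t j ^ (2 * d)) \<le> (\<Sum>i<n. x i ^ (2 * d))"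
proof -
  define P where "P = orth_poly n x d"
  have monic: "degree P = d" "lead_coeff P = 1" using orth_poly_monic[of n x d] by (auto simp: P_def)
  have orth: "orthogonal_below n x P d"
    using orth_poly_orthogonal_support[OF assms(2)] by (simp add: P_def)
  have "card {y. poly P y = 0} = d" by (rule orthogonal_card_roots[OF orth monic assms(2)])
  moreover have "finite {y. poly P y = 0}" using monic by (intro poly_roots_finite) auto
  ultimately obtain t where t: "bij_betw t {..<d} {y. poly P y = 0}"
    using ex_bij_betw_nat_finite by (metis atLeast0LessThan)
  then have inj: "inj_on t {..<d}" and roots: "\<forall>j<d. poly P (t j) = 0"
    by (auto simp: bij_betw_def)
  define w where "w j = moment_fun n x (lagrange_basis t d j)" for j
  have exact: "moment_fun n x p = (\<Sum>j<d. w j * poly p (t j))" if "degree p < 2 * d" for p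
    unfolding w_def by (rule gauss_quadrature_exact[OF orth monic(1) inj roots that])
  show thesis
  proof (rule that[of w t])
    show "\<forall>j<d. 0 \<le> w j" using quadrature_weight_nonneg[OF exact inj] by blast
    show "\<forall>k<2 * d. (\<Sum>j<d. w j * t j ^ k) = (\<Sum>i<n. x i ^ k)"
      using exact[of "monom 1 _"] by (simp add: moment_fun_monom degree_monom_eq poly_monom)
    show "(\<Sum>j<d. w j * t j ^ (2 * d)) \<le> (\<Sum>i<n. x i ^ (2 * d))"
      by (rule quadrature_top_moment_le[OF exact assms(1) monic roots])
  qed
qed

lemma few_points_moments:
  fixes x :: "nat \<Rightarrow> real"
  assumes "card (x ` {..<n}) \<le> d"
  obtains w t where "\<forall>j<d. 0 \<le> w j"
    and "\<forall>k. (\<Sum>j<d. w j * t j ^ k) = (\<Sum>i<n. x i ^ k)"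
proof -
  define V where "V = x ` {..<n}"
  obtain h where h: "bij_betw h {..<card V} V"
    using ex_bij_betw_nat_finite[of V] by (auto simp: V_def atLeast0LessThan)
  define w where "w j = (if j < card V then real (card {i\<in>{..<n}. x i = h j}) else 0)" for j
  have "(\<Sum>j<d. w j * h j ^ k) = (\<Sum>i<n. x i ^ k)" for k
  proof -
    have "(\<Sum>j<d. w j * h j ^ k) = (\<Sum>j<card V. w j * h j ^ k)"
      using assms by (intro sum.mono_neutral_right) (auto simp: w_def V_def)
    also have "\<dots> = (\<Sum>v\<in>V. real (card {i\<in>{..<n}. x i = v}) * v ^ k)"
      using sum.reindex_bij_betw[OF h, of "\<lambda>v. real (card {i\<in>{..<n}. x i = v}) * v ^ k"]
      by (simp add: w_def)
    also have "\<dots> = (\<Sum>v\<in>V. \<Sum>i\<in>{i\<in>{..<n}. x i = v}. x i ^ k)" by simp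
    also have "\<dots> = (\<Sum>i<n. x i ^ k)"
      unfolding V_def by (rule sum.image_gen[symmetric]) simp
    finally show ?thesis .
  qed
  then show thesis by (intro that[of w h]) (auto simp: w_def)
qed

lemma exists_d_point_moments:
  fixes x :: "nat \<Rightarrow> real"
  assumes "0 < d"
  obtains w t where "\<forall>j<d. 0 \<le> w j"
    and "\<forall>k<2 * d. (\<Sum>j<d. w j * t j ^ k) = (\<Sum>i<n. x i ^ k)"
    and "(\<Sum>j<d. w j * t j ^ (2 * d)) \<le> (\<Sum>i<n. x i ^ (2 * d))"
proof (cases "d \<le> card (x ` {..<n})")
  case True
  then show thesis by (rule gauss_quadrature[OF assms _ that])
next
  case False
  then have "card (x ` {..<n}) \<le> d" by simp
  then obtain w t where "\<forall>j<d. 0 \<le> w j" "\<forall>k. (\<Sum>j<d. w j * t j ^ k) = (\<Sum>i<n. x i ^ k)"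
    by (rule few_points_moments)
  then show thesis using that[of w t] by simp
qed

lemma finite_partitions: "finite (partitions m)"
proof (rule finite_subset)
  have "length xs \<le> sum_list xs" if "\<forall>k\<in>set xs. 0 < k" for xs :: "nat list"
    using that by (induction xs) auto
  then show "partitions m \<subseteq> {xs. set xs \<subseteq> {..m} \<and> length xs \<le> m}"
    unfolding partitions_def by (auto intro: member_le_sum_list)
  show "finite {xs. set xs \<subseteq> {..m} \<and> length xs \<le> m}"
    by (rule finite_lists_length_le) simp
qed

lemma partition_containing_whole:
  assumes "lam \<in> partitions m" "m \<in> set lam"
  shows "lam = [m]"
proof -
  obtain xs ys where lam: "lam = xs @ m # ys" using split_list[OF assms(2)] by blast
  then have "sum_list xs = 0" "sum_list ys = 0" using assms(1) by (auto simp: partitions_def)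
  moreover have "\<forall>k\<in>set xs \<union> set ys. 0 < k" using assms(1) lam by (auto simp: partitions_def)
  ultimately show ?thesis using lam by (cases xs; cases ys) (auto simp: sum_list_eq_0_iff)
qed

lemma partition_parts_less:
  assumes "lam \<in> partitions m" "lam \<noteq> [m]" "k \<in> set lam"
  shows "k < m"
proof -
  have "k \<le> m" using member_le_sum_list[OF assms(3)] assms(1) by (simp add: partitions_def)
  moreover have "k \<noteq> m" using partition_containing_whole[OF assms(1)] assms(2,3) by blast
  ultimately show ?thesis by simp
qed

lemma partition_length_pos:
  assumes "lam \<in> partitions m" "0 < m"
  shows "0 < length lam"
  using assms by (auto simp: partitions_def)

lemma sum_partitions_at_0:
  assumes "0 < m"
  shows "(\<Sum>lam\<in>partitions m. c lam * (0::real) ^ (length lam - 1)) = c [m]"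
proof -
  have "c lam * (0::real) ^ (length lam - 1) = (if lam = [m] then c lam else 0)"
    if "lam \<in> partitions m" for lam
  proof (cases "length lam = 1")
    case True
    then obtain a where "lam = [a]" by (auto simp: length_Suc_conv)
    moreover have "sum_list lam = m" using that by (simp add: partitions_def)
    ultimately show ?thesis by simp
  next
    case False
    then have "0 < length lam - 1" using partition_length_pos[OF that assms] by linarith
    moreover have "lam \<noteq> [m]" using False by auto
    ultimately show ?thesis by simp
  qed
  then have "(\<Sum>lam\<in>partitions m. c lam * (0::real) ^ (length lam - 1))
      = (\<Sum>lam\<in>partitions m. if lam = [m] then c lam else 0)"
    by (intro sum.cong) auto
  also have "\<dots> = c [m]" using finite_partitions assms by (simp add: partitions_def)
  finally show ?thesis .
qed

lemma psum_part_eq_Phi: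
  assumes "\<forall>k\<in>set lam. psum n k x = (\<Sum>j<d. s j * t j ^ k)"
  shows "psum_part n lam x = Phi d lam s t"
proof -
  have "map (\<lambda>i. psum n i x) lam = map (\<lambda>k. \<Sum>j<d. s j * t j ^ k) lam"
    using assms by simp
  then show ?thesis unfolding psum_part_def Phi_def by (rule arg_cong)
qed

lemma simplex_normalize:
  assumes "\<forall>j<d. 0 \<le> w j" "(\<Sum>j<d. w j) = W" "0 < W"
  shows "simplex d (\<lambda>j. w j / W)"
proof -
  have "w j \<le> W" if "j < d" for j
    using assms(1) that unfolding assms(2)[symmetric] by (intro member_le_sum) auto
  then show ?thesis
    using assms by (auto simp: simplex_def sum_divide_distrib[symmetric])
qed

text \<open>Along \<open>s = (1 - w, w, 0, \<dots>)\<close>, \<open>t = (0, 1, 0, \<dots>)\<close> every \<open>\<Phi>\<^sub>\<lambda>\<close> equals \<open>w ^ length \<lambda>\<close>, so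
  the hypothesis forces \<open>\<Sum> c\<^sub>\<lambda> w ^ (length \<lambda> - 1) \<ge> 0\<close>; letting \<open>w \<rightarrow> 0\<close> isolates \<open>c\<^sub>[\<^sub>2\<^sub>d\<^sub>]\<close>.\<close>
lemma Phi_nonneg_imp_top_coeff_nonneg:
  assumes "2 \<le> d"
    and "\<forall>s t. simplex d s \<longrightarrow> 0 \<le> (\<Sum>lam\<in>partitions (2 * d). c lam * Phi d lam s t)"
  shows "0 \<le> c [2 * d]"
proof -
  define g where "g w = (\<Sum>lam\<in>partitions (2 * d). c lam * w ^ (length lam - 1))" for w :: real
  have "0 \<le> g w" if w: "0 < w" "w \<le> 1" for w
  proof -
    define s where "s j = (if j = 0 then 1 - w else if j = 1 then w else 0)" for j :: nat
    define t where "t j = (if j = 1 then 1 else 0 :: real)" for j :: nat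
    have sum01: "(\<Sum>j<d. f j) = f 0 + f 1" if "\<forall>j\<ge>2. f j = 0" for f :: "nat \<Rightarrow> real"
    proof -
      have "(\<Sum>j<d. f j) = (\<Sum>j\<in>{0, 1}. f j)"
        using assms(1) that by (intro sum.mono_neutral_right) auto
      then show ?thesis by simp
    qed
    have "simplex d s" using w sum01[of s] by (auto simp: simplex_def s_def)
    moreover have "Phi d lam s t = w * w ^ (length lam - 1)" if "lam \<in> partitions (2 * d)" for lam
    proof -
      have "(\<Sum>j<d. s j * t j ^ k) = w" if "0 < k" for k
        using that sum01[of "\<lambda>j. s j * t j ^ k"] by (simp add: s_def t_def)
      then have "map (\<lambda>k. \<Sum>j<d. s j * t j ^ k) lam = map (\<lambda>_. w) lam"
        using that by (intro map_cong) (auto simp: partitions_def)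
      then have "Phi d lam s t = w ^ length lam"
        by (simp add: Phi_def map_replicate_const prod_list_replicate)
      also have "\<dots> = w * w ^ (length lam - 1)"
        using partition_length_pos[OF that] assms(1) by (simp flip: power_Suc)
      finally show ?thesis .
    qed
    ultimately have "0 \<le> (\<Sum>lam\<in>partitions (2 * d). c lam * (w * w ^ (length lam - 1)))"
      using assms(2) by (metis (no_types, lifting) sum.cong)
    then have "0 \<le> w * g w" by (simp add: g_def sum_distrib_left mult_ac)
    then show ?thesis using w by (simp add: zero_le_mult_iff)
  qed
  then have "\<forall>\<^sub>F w in at_right 0. 0 \<le> g w"
    by (auto simp: eventually_at_right_field intro!: exI[of _ 1])
  moreover have "(g \<longlongrightarrow> g 0) (at_right 0)"
    unfolding g_def by (intro tendsto_intros)
  moreover have "g 0 = c [2 * d]" using sum_partitions_at_0[of "2 * d" c] assms(1) by (simp add: g_def)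
  ultimately show ?thesis using tendsto_lowerbound[of g "g 0" "at_right 0" 0] by simp
qed

lemma psum_nonneg_if_Phi_nonneg:
  fixes x :: "nat \<Rightarrow> real"
  assumes "2 \<le> d" "2 * d \<le> n"
    and Phi_nonneg: "\<forall>s t. simplex d s \<longrightarrow> 0 \<le> (\<Sum>lam\<in>partitions (2 * d). c lam * Phi d lam s t)"
  shows "0 \<le> (\<Sum>lam\<in>partitions (2 * d). c lam * psum_part n lam x)"
proof -
  obtain w t where w: "\<forall>j<d. 0 \<le> w j"
    and low: "\<forall>k<2 * d. (\<Sum>j<d. w j * t j ^ k) = (\<Sum>i<n. x i ^ k)"
    and top: "(\<Sum>j<d. w j * t j ^ (2 * d)) \<le> (\<Sum>i<n. x i ^ (2 * d))"
    using exists_d_point_moments[of d x n] assms(1) by auto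
  define s where "s j = w j / real n" for j
  have n: "0 < real n" using assms(1,2) by simp
  have "(\<Sum>j<d. w j) = real n" using low[rule_format, of 0] assms(1) by simp
  then have "simplex d s" unfolding s_def using simplex_normalize w n by blast
  have moment: "(\<Sum>j<d. s j * t j ^ k) = (\<Sum>j<d. w j * t j ^ k) / real n" for k
    by (simp add: s_def sum_divide_distrib[symmetric])
  have "c lam * Phi d lam s t \<le> c lam * psum_part n lam x" if "lam \<in> partitions (2 * d)" for lam
  proof (cases "lam = [2 * d]")
    case True
    have "Phi d lam s t \<le> psum_part n lam x"
      using top n by (simp add: True Phi_def psum_part_def psum_def moment divide_right_mono)
    then show ?thesis using Phi_nonneg_imp_top_coeff_nonneg[OF assms(1) Phi_nonneg] True
      by (simp add: mult_left_mono)
  next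
    case False
    have "psum_part n lam x = Phi d lam s t"
      using low partition_parts_less[OF that False]
      by (intro psum_part_eq_Phi) (auto simp: psum_def moment)
    then show ?thesis by simp
  qed
  then have "(\<Sum>lam\<in>partitions (2 * d). c lam * Phi d lam s t)
      \<le> (\<Sum>lam\<in>partitions (2 * d). c lam * psum_part n lam x)"
    by (rule sum_mono)
  moreover have "0 \<le> (\<Sum>lam\<in>partitions (2 * d). c lam * Phi d lam s t)"
    using Phi_nonneg \<open>simplex d s\<close> by blast
  ultimately show ?thesis by linarith
qed

lemma exists_points_with_multiplicities:
  fixes a :: "nat \<Rightarrow> nat" and t :: "nat \<Rightarrow> real"
  shows "\<exists>x. \<forall>k. (\<Sum>i<(\<Sum>j<m. a j). x i ^ k) = (\<Sum>j<m. real (a j) * t j ^ k)"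
proof (induction m)
  case (Suc m)
  then obtain x where x: "\<forall>k. (\<Sum>i<(\<Sum>j<m. a j). x i ^ k) = (\<Sum>j<m. real (a j) * t j ^ k)"
    by blast
  define A where "A = (\<Sum>j<m. a j)"
  define y where "y i = (if i < A then x i else t m)" for i
  have "(\<Sum>i<(\<Sum>j<Suc m. a j). y i ^ k) = (\<Sum>j<Suc m. real (a j) * t j ^ k)" for k
  proof -
    have "(\<Sum>i<(\<Sum>j<Suc m. a j). y i ^ k) = (\<Sum>i\<in>{0..<A}. y i ^ k) + (\<Sum>i\<in>{A..<A + a m}. y i ^ k)"
      by (simp add: A_def atLeast0LessThan[symmetric] sum.atLeastLessThan_concat)
    also have "\<dots> = (\<Sum>i<A. x i ^ k) + real (a m) * t m ^ k"
      by (simp add: y_def atLeast0LessThan)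
    finally show ?thesis using x by (simp add: A_def)
  qed
  then show ?case by blast
qed simp

lemma floor_mult_div_tendsto: "(\<lambda>N. of_int \<lfloor>real N * r\<rfloor> / real N) \<longlonglongrightarrow> r"
proof (rule tendsto_sandwich)
  show "\<forall>\<^sub>F N in sequentially. r - inverse (real N) \<le> of_int \<lfloor>real N * r\<rfloor> / real N"
  proof (rule eventually_sequentiallyI[of 1])
    fix N :: nat
    assume "1 \<le> N"
    then have "(real N * r - 1) / real N \<le> of_int \<lfloor>real N * r\<rfloor> / real N"
      by (intro divide_right_mono) linarith+
    then show "r - inverse (real N) \<le> of_int \<lfloor>real N * r\<rfloor> / real N"
      using \<open>1 \<le> N\<close> by (simp add: field_simps)
  qed
  show "\<forall>\<^sub>F N in sequentially. of_int \<lfloor>real N * r\<rfloor> / real N \<le> r"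
  proof (rule eventually_sequentiallyI[of 1])
    fix N :: nat
    assume "1 \<le> N"
    then have "of_int \<lfloor>real N * r\<rfloor> / real N \<le> real N * r / real N"
      by (intro divide_right_mono) auto
    then show "of_int \<lfloor>real N * r\<rfloor> / real N \<le> r" using \<open>1 \<le> N\<close> by simp
  qed
  show "(\<lambda>N. r - inverse (real N)) \<longlonglongrightarrow> r"
    using tendsto_diff[OF tendsto_const lim_inverse_n, of r] by simp
qed simp

text \<open>Rounding down all coordinates but the first and giving the rest to the first.\<close>
lemma simplex_approx_by_fractions:
  assumes "simplex d s" "0 < d"
  obtains a :: "nat \<Rightarrow> nat \<Rightarrow> nat"
  where "\<And>N. (\<Sum>j<d. a N j) = N" and "\<And>j. j < d \<Longrightarrow> (\<lambda>N. real (a N j) / real N) \<longlonglongrightarrow> s j"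
proof -
  have s: "\<forall>j<d. 0 \<le> s j" "(\<Sum>j<d. s j) = 1" using assms(1) by (auto simp: simplex_def)
  have split0: "(\<Sum>j<d. f j) = f 0 + (\<Sum>j\<in>{1..<d}. f j)" for f :: "nat \<Rightarrow> 'a::comm_monoid_add"
    using sum.atLeast_Suc_lessThan[OF assms(2), of f] by (simp add: atLeast0LessThan)
  define b where "b N j = nat \<lfloor>real N * s j\<rfloor>" for N j
  define a where "a N j = (if j = 0 then N - (\<Sum>i\<in>{1..<d}. b N i) else b N j)" for N j
  have b: "real (b N j) = of_int \<lfloor>real N * s j\<rfloor>" if "j < d" for N j
    using s(1) that by (simp add: b_def)
  have "real (\<Sum>i\<in>{1..<d}. b N i) \<le> (\<Sum>i\<in>{1..<d}. real N * s i)" for N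
    unfolding of_nat_sum using b by (intro sum_mono) auto
  also have "(\<Sum>i\<in>{1..<d}. real N * s i) \<le> real N" for N
  proof -
    have "(\<Sum>i\<in>{1..<d}. s i) \<le> 1" using s split0[of s] assms(2) by force
    then show ?thesis by (simp add: sum_distrib_left[symmetric] mult_left_le)
  qed
  finally have bN: "(\<Sum>i\<in>{1..<d}. b N i) \<le> N" for N by (simp only: of_nat_le_iff)
  have a1: "(\<lambda>N. real (a N j) / real N) \<longlonglongrightarrow> s j" if "j \<in> {1..<d}" for j
    using that floor_mult_div_tendsto[of "s j"] by (simp add: a_def b)
  have "(\<lambda>N. 1 - (\<Sum>j\<in>{1..<d}. real (a N j) / real N)) \<longlonglongrightarrow> 1 - (\<Sum>j\<in>{1..<d}. s j)"
    by (intro tendsto_intros a1)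
  moreover have "\<forall>\<^sub>F N in sequentially.
      1 - (\<Sum>j\<in>{1..<d}. real (a N j) / real N) = real (a N 0) / real N"
  proof (rule eventually_sequentiallyI[of 1])
    fix N :: nat
    assume "1 \<le> N"
    then show "1 - (\<Sum>j\<in>{1..<d}. real (a N j) / real N) = real (a N 0) / real N"
      using bN[of N]
      by (simp add: a_def of_nat_diff sum_divide_distrib[symmetric] diff_divide_distrib)
  qed
  ultimately have "(\<lambda>N. real (a N 0) / real N) \<longlonglongrightarrow> 1 - (\<Sum>j\<in>{1..<d}. s j)"
    by (rule Lim_transform_eventually)
  also have "1 - (\<Sum>j\<in>{1..<d}. s j) = s 0" using s(2) split0[of s] by simp
  finally have a0: "(\<lambda>N. real (a N 0) / real N) \<longlonglongrightarrow> s 0" .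
  show thesis
  proof (rule that)
    show "(\<Sum>j<d. a N j) = N" for N using split0[of "a N"] bN[of N] by (simp add: a_def)
    show "(\<lambda>N. real (a N j) / real N) \<longlonglongrightarrow> s j" if "j < d" for j
      using a0 a1 that by (cases "j = 0") auto
  qed
qed

lemma tendsto_prod_list_map:
  fixes g :: "'b \<Rightarrow> 'c \<Rightarrow> 'a::real_normed_algebra_1"
  assumes "\<forall>k\<in>set lam. ((\<lambda>N. g N k) \<longlongrightarrow> G k) F"
  shows "((\<lambda>N. prod_list (map (g N) lam)) \<longlongrightarrow> prod_list (map G lam)) F"
  using assms by (induction lam) (simp_all add: tendsto_mult)

lemma Phi_nonneg_if_psum_nonneg:
  assumes "0 < d" "simplex d s"
    and psum_nonneg: "\<forall>n\<ge>2 * d. \<forall>x. 0 \<le> (\<Sum>lam\<in>partitions (2 * d). c lam * psum_part n lam x)"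
  shows "0 \<le> (\<Sum>lam\<in>partitions (2 * d). c lam * Phi d lam s t)"
proof -
  obtain a where a: "\<And>N. (\<Sum>j<d. a N j) = N"
    and lim: "\<And>j. j < d \<Longrightarrow> (\<lambda>N. real (a N j) / real N) \<longlonglongrightarrow> s j"
    using simplex_approx_by_fractions[OF assms(2,1)] by blast
  define s' where "s' N j = real (a N j) / real N" for N j
  have "0 \<le> (\<Sum>lam\<in>partitions (2 * d). c lam * Phi d lam (s' N) t)" if "2 * d \<le> N" for N
  proof -
    obtain x where x: "\<forall>k. (\<Sum>i<N. x i ^ k) = (\<Sum>j<d. real (a N j) * t j ^ k)"
      using exists_points_with_multiplicities[where a = "a N" and t = t and m = d] by (auto simp: a)
    have "psum_part N lam x = Phi d lam (s' N) t" for lam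
      using x by (intro psum_part_eq_Phi)
        (simp add: psum_def s'_def sum_divide_distrib[symmetric] sum_distrib_left)
    moreover have "0 \<le> (\<Sum>lam\<in>partitions (2 * d). c lam * psum_part N lam x)"
      using psum_nonneg that by blast
    ultimately show ?thesis by simp
  qed
  moreover have "(\<lambda>N. \<Sum>lam\<in>partitions (2 * d). c lam * Phi d lam (s' N) t)
      \<longlonglongrightarrow> (\<Sum>lam\<in>partitions (2 * d). c lam * Phi d lam s t)"
    unfolding Phi_def s'_def by (intro tendsto_intros tendsto_prod_list_map ballI lim) simp
  ultimately show ?thesis by (intro LIMSEQ_le_const) (auto intro!: exI[of _ "2 * d"])
qed

theorem theorem3p4:
  fixes d :: nat and c :: "nat list \<Rightarrow> real"
  assumes "d \<ge> 2"
  shows "(\<forall>n\<ge>2*d. \<forall>x::nat \<Rightarrow> real.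
            (\<Sum>lam\<in>partitions (2*d). c lam * psum_part n lam x) \<ge> 0)
     \<longleftrightarrow> (\<forall>s t::nat \<Rightarrow> real. simplex d s \<longrightarrow>
            (\<Sum>lam\<in>partitions (2*d). c lam * Phi d lam s t) \<ge> 0)"
proof
  assume "\<forall>n\<ge>2*d. \<forall>x. (\<Sum>lam\<in>partitions (2*d). c lam * psum_part n lam x) \<ge> 0"
  then show "\<forall>s t. simplex d s \<longrightarrow> (\<Sum>lam\<in>partitions (2*d). c lam * Phi d lam s t) \<ge> 0"
    using Phi_nonneg_if_psum_nonneg[of d] assms by simp
next
  assume "\<forall>s t. simplex d s \<longrightarrow> (\<Sum>lam\<in>partitions (2*d). c lam * Phi d lam s t) \<ge> 0"
  then show "\<forall>n\<ge>2*d. \<forall>x. (\<Sum>lam\<in>partitions (2*d). c lam * psum_part n lam x) \<ge> 0"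
    using psum_nonneg_if_Phi_nonneg[of d] assms by simp
qed

end
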